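(* Let $\mathsf{NL}+\{\mathrm{D}\}$ be $\mathsf{NL}$ extended by the axiom scheme (D) $\varphi\Rightarrow\varphi\oplus\psi$, where $\varphi\oplus\psi:=(\varphi^{*}\otimes\psi^{*})^{*}$. Then $\mathsf{NL}+\{\mathrm{D}\}$ is trivial, i.e. every formula is a theorem of it.
   Context: Formulas are built from a countably infinite set of variables using binary $\otimes,\circ$ and unary ${}^{*}$. Abbreviations: $\varphi\Rightarrow\psi:=(\varphi\circ\psi^{*})^{*}$; $\varphi\Leftrightarrow\psi:=(\varphi\Rightarrow\psi)\otimes(\psi\Rightarrow\varphi)$; $\varphi\not\Leftrightarrow\psi:=(\varphi\Leftrightarrow\psi)^{*}$; $\varphi\not\Leftrightarrow\psi\not\Leftrightarrow\chi:=((\varphi\not\Leftrightarrow\psi)\otimes(\varphi\not\Leftrightarrow\chi))\otimes(\psi\not\Leftrightarrow\chi)$. Axiom schemes: (A1) $\varphi\Rightarrow\varphi$; (A2) $(\varphi\circ\psi)\Rightarrow(\psi\circ\varphi)$; (A3) $\varphi\Rightarrow\varphi^{**}$; (A4) $(\varphi\Rightarrow\psi)\Rightarrow(\varphi\circ\psi)$; (A5) $(\varphi\otimes\psi)\Leftrightarrow(\psi\otimes\varphi)$; (A6) $((\varphi\otimes\psi)\Rightarrow\chi)\Rightarrow((\varphi\otimes\chi^{*})\Rightarrow\psi^{*})$; (A7) $(\varphi\not\Leftrightarrow\psi\not\Leftrightarrow\chi)\Rightarrow((\varphi\Rightarrow\psi)\Rightarrow((\psi\Rightarrow\chi)\Rightarrow(\varphi\Rightarrow\chi)))$.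 Theorems of $\mathsf{NL}$: least set containing all instances of (A1)–(A7) and closed under rules applying only to theorems: from theorems $\varphi\Rightarrow\psi$, $\varphi$ infer $\psi$; from theorems $\varphi,\psi$ infer $\varphi\otimes\psi$; from theorems $\varphi\Leftrightarrow\psi$ and $\chi$ infer $\chi'$ ($\chi'$ from $\chi$ replacing one or more occurrences of $\varphi$ by $\psi$); from a theorem $\varphi\otimes\psi$ infer $\varphi$. Extending by an axiom scheme adds its instances to the initial set. *)

theory Defs
  imports Main
begin

datatype fm = Var nat | Ot fm fm | Ci fm fm | St fm

definition Imp :: "fm \<Rightarrow> fm \<Rightarrow> fm" where
  "Imp a b = St (Ci a (St b))"
definition Iff :: "fm \<Rightarrow> fm \<Rightarrow> fm" where
  "Iff a b = Ot (Imp a b) (Imp b a)"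
definition NIff :: "fm \<Rightarrow> fm \<Rightarrow> fm" where
  "NIff a b = St (Iff a b)"
definition NIff3 :: "fm \<Rightarrow> fm \<Rightarrow> fm \<Rightarrow> fm" where
  "NIff3 a b c = Ot (Ot (NIff a b) (NIff a c)) (NIff b c)"
definition Oplus :: "fm \<Rightarrow> fm \<Rightarrow> fm" where
  "Oplus a b = St (Ot (St a) (St b))"

inductive NL_ax :: "fm \<Rightarrow> bool" where
  A1: "NL_ax (Imp a a)"
| A2: "NL_ax (Imp (Ci a b) (Ci b a))"
| A3: "NL_ax (Imp a (St (St a)))"
| A4: "NL_ax (Imp (Imp a b) (Ci a b))"
| A5: "NL_ax (Iff (Ot a b) (Ot b a))"
| A6: "NL_ax (Imp (Imp (Ot a b) c) (Imp (Ot a (St c)) (St b)))"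
| A7: "NL_ax (Imp (NIff3 a b c) (Imp (Imp a b) (Imp (Imp b c) (Imp a c))))"

inductive repl0 :: "fm \<Rightarrow> fm \<Rightarrow> fm \<Rightarrow> fm \<Rightarrow> bool" where
  r_refl: "repl0 a b x x"
| r_here: "repl0 a b a b"
| r_Ot: "repl0 a b x x' \<Longrightarrow> repl0 a b y y' \<Longrightarrow> repl0 a b (Ot x y) (Ot x' y')"
| r_Ci: "repl0 a b x x' \<Longrightarrow> repl0 a b y y' \<Longrightarrow> repl0 a b (Ci x y) (Ci x' y')"
| r_St: "repl0 a b x x' \<Longrightarrow> repl0 a b (St x) (St x')"

inductive repl :: "fm \<Rightarrow> fm \<Rightarrow> fm \<Rightarrow> fm \<Rightarrow> bool" where
  p_here: "repl a b a b"
| p_Ot1: "repl a b x x' \<Longrightarrow> repl0 a b y y' \<Longrightarrow> repl a b (Ot x y) (Ot x' y')"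
| p_Ot2: "repl0 a b x x' \<Longrightarrow> repl a b y y' \<Longrightarrow> repl a b (Ot x y) (Ot x' y')"
| p_Ci1: "repl a b x x' \<Longrightarrow> repl0 a b y y' \<Longrightarrow> repl a b (Ci x y) (Ci x' y')"
| p_Ci2: "repl0 a b x x' \<Longrightarrow> repl a b y y' \<Longrightarrow> repl a b (Ci x y) (Ci x' y')"
| p_St: "repl a b x x' \<Longrightarrow> repl a b (St x) (St x')"

inductive NL_thm :: "(fm \<Rightarrow> bool) \<Rightarrow> fm \<Rightarrow> bool" for Ax where
  ax_NL: "NL_ax a \<Longrightarrow> NL_thm Ax a"
| ax_ext: "Ax a \<Longrightarrow> NL_thm Ax a"
| MP: "NL_thm Ax (Imp a b) \<Longrightarrow> NL_thm Ax a \<Longrightarrow> NL_thm Ax b"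
| Adj: "NL_thm Ax a \<Longrightarrow> NL_thm Ax b \<Longrightarrow> NL_thm Ax (Ot a b)"
| Rep: "NL_thm Ax (Iff a b) \<Longrightarrow> NL_thm Ax c \<Longrightarrow> repl a b c c' \<Longrightarrow> NL_thm Ax c'"
| Simp: "NL_thm Ax (Ot a b) \<Longrightarrow> NL_thm Ax a"

definition D_ax :: "fm \<Rightarrow> bool" where
  "D_ax c \<longleftrightarrow> (\<exists>a b. c = Imp a (Oplus a b))"

end

theory Submission
  imports Defs
begin

text \<open>Axiom (D) is itself refutable: for \<open>\<phi> = b\<^sup>*\<close> and \<open>\<psi> = b\<^sup>*\<^sup>* \<otimes> b\<close>,
  the instance \<open>\<phi> \<Rightarrow> \<phi> \<oplus> \<psi>\<close> is literally the negation of
  \<open>b\<^sup>* \<circ> (b\<^sup>*\<^sup>* \<otimes> (b\<^sup>*\<^sup>* \<otimes> b)\<^sup>*)\<^sup>*\<^sup>*\<close>, which NL proves from the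
  instance (A6) of (A1), followed by (A4), (A2) and double negation. Once some \<open>t\<close>
  and \<open>t\<^sup>*\<close> are both theorems, (D) gives \<open>t \<oplus> \<chi> = (t\<^sup>* \<otimes> \<chi>\<^sup>*)\<^sup>*\<close>, and (A6)
  applied to (A1) turns \<open>t\<^sup>* \<otimes> (t\<^sup>* \<otimes> \<chi>\<^sup>*)\<^sup>*\<close> into \<open>\<chi>\<^sup>*\<^sup>*\<close>, hence \<open>\<chi>\<close>.\<close>

lemma NL_thm_Ci_of_Imp: "NL_thm Ax (Imp a b) \<Longrightarrow> NL_thm Ax (Ci a b)"
  by (rule MP[OF ax_NL[OF A4]])

lemma NL_thm_Ci_commute: "NL_thm Ax (Ci a b) \<Longrightarrow> NL_thm Ax (Ci b a)"
  by (rule MP[OF ax_NL[OF A2]])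

lemma NL_thm_contrapose:
  "NL_thm Ax (Imp (Ot a b) c) \<Longrightarrow> NL_thm Ax (Imp (Ot a (St c)) (St b))"
  by (rule MP[OF ax_NL[OF A6]])

lemma NL_thm_Iff_Ci_commute: "NL_thm Ax (Iff (Ci a b) (Ci b a))"
  unfolding Iff_def by (intro Adj ax_NL A2)

lemma NL_thm_Imp_St_St: "NL_thm Ax (Imp (St (St a)) a)"
proof -
  have "NL_thm Ax (St (Ci (St a) (St (St a))))"
    using ax_NL[OF A1[of "St a"]] by (simp add: Imp_def)
  with NL_thm_Iff_Ci_commute have "NL_thm Ax (St (Ci (St (St a)) (St a)))"
    by (rule Rep) (rule p_St, rule p_here)
  then show ?thesis
    by (simp add: Imp_def)
qed

lemma NL_thm_Iff_St_St: "NL_thm Ax (Iff a (St (St a)))"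
  unfolding Iff_def by (intro Adj ax_NL[OF A3] NL_thm_Imp_St_St)

lemma NL_thm_St_StD: "NL_thm Ax (St (St a)) \<Longrightarrow> NL_thm Ax a"
  by (rule MP[OF NL_thm_Imp_St_St])

lemma NL_thm_Ci_St_absorb: "NL_thm Ax (Ci (St b) (St (St (Ot a (St (Ot a b))))))"
proof -
  have "NL_thm Ax (Imp (Ot a (St (Ot a b))) (St b))"
    by (rule NL_thm_contrapose[OF ax_NL[OF A1]])
  then have "NL_thm Ax (Ci (St b) (Ot a (St (Ot a b))))"
    by (rule NL_thm_Ci_commute[OF NL_thm_Ci_of_Imp])
  with NL_thm_Iff_St_St show ?thesis
    by (rule Rep) (rule p_Ci2, rule r_refl, rule p_here)
qed

lemma NL_thm_D: "D_ax \<le> Ax \<Longrightarrow> NL_thm Ax (Imp a (Oplus a b))"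
  by (rule ax_ext, erule predicate1D) (auto simp: D_ax_def)

lemma NL_thm_D_inconsistent:
  assumes "D_ax \<le> Ax"
  shows "\<exists>t. NL_thm Ax t \<and> NL_thm Ax (St t)"
proof -
  let ?x = "Var 0"
  let ?t = "Ci (St ?x) (St (St (Ot (St (St ?x)) (St (Ot (St (St ?x)) ?x)))))"
  have "NL_thm Ax (Imp (St ?x) (Oplus (St ?x) (Ot (St (St ?x)) ?x)))"
    using assms by (rule NL_thm_D)
  then have "NL_thm Ax (St ?t)"
    by (simp add: Imp_def Oplus_def)
  with NL_thm_Ci_St_absorb show ?thesis
    by blast
qed

lemma NL_thm_D_explosive:
  assumes "D_ax \<le> Ax" and "NL_thm Ax t" and "NL_thm Ax (St t)"
  shows "NL_thm Ax c"
proof -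
  have "NL_thm Ax (Imp (Ot (St t) (St (Ot (St t) (St c)))) (St (St c)))"
    by (rule NL_thm_contrapose[OF ax_NL[OF A1]])
  moreover have "NL_thm Ax (Oplus t c)"
    using NL_thm_D[OF assms(1)] assms(2) by (rule MP)
  then have "NL_thm Ax (Ot (St t) (St (Ot (St t) (St c))))"
    using assms(3) by (simp add: Oplus_def Adj)
  ultimately show ?thesis
    by (rule NL_thm_St_StD[OF MP])
qed

theorem proposition5p10:
  shows "\<forall>\<phi>. NL_thm D_ax \<phi>"
proof
  fix \<phi>
  obtain t where "NL_thm D_ax t" and "NL_thm D_ax (St t)"
    using NL_thm_D_inconsistent[OF order_refl] by blast
  then show "NL_thm D_ax \<phi>"
    by (rule NL_thm_D_explosive[OF order_refl])
qed

end
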